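(* Let $m\ge 8$ be an even integer. There do not exist a graph $G=(V,E)$ with $|V|=m$ and a function $h:E\to\{0,1\}$ such that simultaneously (1) there are at least $\dfrac{2^m}{2^{\lceil\log_2 m\rceil}}$ colourings of $G$ according to $h$, and (2) $G$ contains a connected component with more than $\frac{m}{2}$ vertices.
   Context: Given a graph $G=(V,E)$ and a function $h:E\to\{0,1\}$, a colouring of $G$ according to $h$ is a function $c:V\to\{0,1\}$ such that $c(u)\oplus c(v)=h(\{u,v\})$ for every edge $\{u,v\}\in E$. A connected component of a graph is a nonempty maximal connected induced subgraph; its cardinality is its number of vertices. *)

theory Defs
  imports Main "HOL-Library.FuncSet" Complex_Main
begin

definition simple_graph :: "'a set \<Rightarrow> 'a set set \<Rightarrow> bool" where
  "simple_graph V E \<longleftrightarrow> finite V \<and>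
     (\<forall>e\<in>E. \<exists>u v. u \<in> V \<and> v \<in> V \<and> u \<noteq> v \<and> e = {u, v})"

text \<open>Colourings c : V -> {0,1} according to h : E -> {0,1}; we encode {0,1} as bool,
  so XOR is inequality. Colourings are extensional functions on V.\<close>
definition colourings :: "'a set \<Rightarrow> 'a set set \<Rightarrow> ('a set \<Rightarrow> bool) \<Rightarrow> ('a \<Rightarrow> bool) set" where
  "colourings V E h = {c \<in> V \<rightarrow>\<^sub>E (UNIV :: bool set).
      \<forall>u v. {u, v} \<in> E \<longrightarrow> (c u \<noteq> c v) = h {u, v}}"

definition connected_induced :: "'a set set \<Rightarrow> 'a set \<Rightarrow> bool" where
  "connected_induced E D \<longleftrightarrow>
     (\<forall>u\<in>D. \<forall>v\<in>D. (\<lambda>x y. x \<in> D \<and> y \<in> D \<and> {x, y} \<in> E)\<^sup>*\<^sup>* u v)"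

definition connected_component :: "'a set \<Rightarrow> 'a set set \<Rightarrow> 'a set \<Rightarrow> bool" where
  "connected_component V E C \<longleftrightarrow> C \<subseteq> V \<and> C \<noteq> {} \<and> connected_induced E C \<and>
     (\<forall>D. C \<subset> D \<and> D \<subseteq> V \<longrightarrow> \<not> connected_induced E D)"

end

theory Submission
  imports Defs
begin

text \<open>A colouring according to h is determined on a connected vertex set C by its value at
  a single vertex of C, because along every edge the colour change is prescribed by h. Hence a
  graph on m vertices with a component of more than m/2 vertices has at most
  2^(m - |C| + 1) \<le> 2^(m/2) colourings, whereas for even m \<ge> 8 we have
  \<lceil>log 2 m\<rceil> \<le> m/2 - 1, so the required number of colourings is at least 2^(m/2 + 1).\<close>

lemma colourings_agree_on_connected:
  assumes c1: "c1 \<in> colourings V E h" and c2: "c2 \<in> colourings V E h"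
    and C: "connected_induced E C" and r: "r \<in> C" and v: "v \<in> C"
    and agree: "c1 r = c2 r"
  shows "c1 v = c2 v"
proof -
  have "(\<lambda>x y. x \<in> C \<and> y \<in> C \<and> {x, y} \<in> E)\<^sup>*\<^sup>* r v"
    using C r v unfolding connected_induced_def by blast
  then show ?thesis
  proof (induction rule: rtranclp_induct)
    case base
    show ?case using agree .
  next
    case (step y z)
    then have "{y, z} \<in> E" by simp
    then have "(c1 y \<noteq> c1 z) = (c2 y \<noteq> c2 z)"
      using c1 c2 unfolding colourings_def by auto
    with step.IH show ?case by auto
  qed
qed

lemma card_colourings_le_connected:
  assumes V: "finite V" and C: "connected_induced E C" "C \<subseteq> V" "C \<noteq> {}"
  shows "card (colourings V E h) \<le> 2 ^ (card V - card C + 1)"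
proof -
  obtain r where r: "r \<in> C" using C(3) by blast
  define S where "S = insert r (V - C)"
  have "inj_on (\<lambda>c. restrict c S) (colourings V E h)"
  proof (rule inj_onI)
    fix c1 c2
    assume c1: "c1 \<in> colourings V E h" and c2: "c2 \<in> colourings V E h"
      and "restrict c1 S = restrict c2 S"
    then have agree: "c1 x = c2 x" if "x \<in> S" for x
      using that by (metis restrict_apply')
    show "c1 = c2"
    proof
      fix v
      consider "v \<notin> V" | "v \<in> V - C" | "v \<in> C" by blast
      then show "c1 v = c2 v"
      proof cases
        case 1
        moreover have "c1 \<in> V \<rightarrow>\<^sub>E UNIV" "c2 \<in> V \<rightarrow>\<^sub>E UNIV"
          using c1 c2 by (auto simp: colourings_def)
        ultimately show ?thesis using PiE_arb by metis
      next
        case 2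
        then show ?thesis by (simp add: agree S_def)
      next
        case 3
        have "c1 r = c2 r" by (simp add: agree S_def)
        with 3 show ?thesis by (rule colourings_agree_on_connected[OF c1 c2 C(1) r])
      qed
    qed
  qed
  moreover have "(\<lambda>c. restrict c S) ` colourings V E h \<subseteq> S \<rightarrow>\<^sub>E (UNIV :: bool set)"
    by auto
  moreover have S: "finite S" using V S_def by simp
  ultimately have "card (colourings V E h) \<le> card (S \<rightarrow>\<^sub>E (UNIV :: bool set))"
    by (metis card_image card_mono finite_PiE finite_UNIV)
  also have "\<dots> = 2 ^ card S" using S by (simp add: card_PiE)
  also have "card S = card V - card C + 1"
    using r V C(2) finite_subset[OF C(2) V] by (simp add: S_def card_Diff_subset)
  finally show ?thesis .
qed

lemma double_le_two_power_pred: "4 \<le> n \<Longrightarrow> 2 * n \<le> (2::nat) ^ (n - 1)"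
proof (induction n rule: dec_induct)
  case base
  show ?case by simp
next
  case (step n)
  then have "2 ^ (Suc n - 1) = 2 * (2::nat) ^ (n - 1)"
    by (simp add: power_Suc[symmetric])
  with step show ?case by simp
qed

lemma nat_ceiling_log2_le:
  assumes "0 < m" and "m \<le> (2::nat) ^ k"
  shows "nat \<lceil>log 2 (real m)\<rceil> \<le> k"
proof -
  have "real m \<le> 2 ^ k" using assms(2) by (metis of_nat_le_iff of_nat_numeral of_nat_power)
  then have "log 2 (real m) \<le> real k"
    using assms(1) by (simp add: log_le_iff powr_realpow)
  then show ?thesis by (simp add: ceiling_le_iff nat_le_iff)
qed

lemma two_power_le_div_ceiling_log2:
  assumes "4 \<le> n"
  shows "(2::real) ^ (n + 1) \<le> 2 ^ (2 * n) / 2 ^ nat \<lceil>log 2 (real (2 * n))\<rceil>"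
proof -
  have "nat \<lceil>log 2 (real (2 * n))\<rceil> \<le> n - 1"
    using assms by (intro nat_ceiling_log2_le double_le_two_power_pred) auto
  then have "(2::real) ^ (n + 1) * 2 ^ nat \<lceil>log 2 (real (2 * n))\<rceil> \<le> 2 ^ (n + 1) * 2 ^ (n - 1)"
    by (simp add: power_increasing)
  also have "\<dots> = 2 ^ (2 * n)"
  proof -
    have "2 * n = (n + 1) + (n - 1)" using assms by simp
    then show ?thesis by (simp only: power_add)
  qed
  finally show ?thesis by (simp add: pos_le_divide_eq)
qed

theorem theorem2:
  fixes m :: nat
  assumes "even m" and "m \<ge> 8"
  shows "\<not> (\<exists>(V :: 'a set) (E :: 'a set set) (h :: 'a set \<Rightarrow> bool).
             simple_graph V E \<and> card V = m \<and>
             real (card (colourings V E h)) \<ge> 2 ^ m / 2 ^ nat \<lceil>log 2 (real m)\<rceil> \<and>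
             (\<exists>C. connected_component V E C \<and> real (card C) > real m / 2))"
proof
  assume "\<exists>(V :: 'a set) E h. simple_graph V E \<and> card V = m \<and>
             real (card (colourings V E h)) \<ge> 2 ^ m / 2 ^ nat \<lceil>log 2 (real m)\<rceil> \<and>
             (\<exists>C. connected_component V E C \<and> real (card C) > real m / 2)"
  then obtain V :: "'a set" and E h C where G: "simple_graph V E" "card V = m"
    and many: "real (card (colourings V E h)) \<ge> 2 ^ m / 2 ^ nat \<lceil>log 2 (real m)\<rceil>"
    and C: "connected_component V E C" "real (card C) > real m / 2" by blast
  obtain n where m: "m = 2 * n" using assms(1) by blast
  have V: "finite V" and "C \<subseteq> V"
    using G(1) C(1) by (auto simp: simple_graph_def connected_component_def)
  then have "card C \<le> card V" by (rule card_mono)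
  have "card (colourings V E h) \<le> 2 ^ (card V - card C + 1)"
    using C(1) V by (intro card_colourings_le_connected) (auto simp: connected_component_def)
  also have "\<dots> \<le> 2 ^ n"
    using \<open>card C \<le> card V\<close> G(2) C(2) m by (intro power_increasing) auto
  finally have few: "real (card (colourings V E h)) \<le> 2 ^ n"
    by (metis of_nat_le_iff of_nat_numeral of_nat_power)
  have "(2::real) ^ (n + 1) \<le> 2 ^ m / 2 ^ nat \<lceil>log 2 (real m)\<rceil>"
    using two_power_le_div_ceiling_log2[of n] m assms(2) by simp
  moreover have "(2::real) ^ n < 2 ^ (n + 1)" by simp
  ultimately show False using many few by linarith
qed

end
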